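(* In the setting described in the context: (i) if $\mathcal B'\in M_{r+1}(\mathbb Z)$ satisfies $\mathcal A\mathcal B'=nI_{r+1}$, then $t$ divides $n$; (ii) consequently, if $(\alpha'_0,\dots,\alpha'_r)\in L^{r+1}$ satisfies $au_j(\alpha'_j)=n>0$ for all $j$ and $au_k(\alpha'_j)=0$ for all $k\ne j$ (a uniform positive dual family to $(au_0,\dots,au_r)$), then $t$ divides $n$; (iii) the family $(\alpha_0,\dots,\alpha_r)$ has the property that for every prime $p$ there is an index $0\le j\le r$ such that $\alpha_j-n'h'\notin pL$ for all $n'\in\mathbb Z$.
   Context: Let $\mathbb K$ be a number field of degree $d=r+2\ge2$ with exactly one pair of complex conjugate embeddings; order its embeddings $\sigma_1,\dots,\sigma_r$ (real), $\sigma_{r+1}=\sigma_{\mathbb C}$, $\sigma_{r+2}=\overline{\sigma_{\mathbb C}}$. A $\mathbb Q$-basis $(e_0,\dots,e_{r+1})$ of $\mathbb K$ is positive if $i\cdot\det(\sigma_j(e_{k-1}))_{1\le j,k\le d}>0$. Let $\mathfrak f\ne\mathcal O_{\mathbb K}$ be an integral ideal, $q\mathbb Z=\mathfrak f\cap\mathbb Z$, $\mathfrak b$ an integral ideal coprime to $\mathfrak f$, $L=\mathfrak f\mathfrak b^{-1}$, $\mathfrak a$ an integral ideal coprime to $\mathfrak f\mathfrak b$ with $\mathfrak a^{-1}L/L$ cyclic, $N=\mathcal N(\mathfrak a)$. An element $h\in L$ is admissible if $h/q-1\in L$ and $h/N$ generates $\mathfrak a^{-1}L/L$. Let $\mathcal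 O^{+,\times}_{\mathfrak f}$ be the group of units $\equiv1\bmod\mathfrak f$ that are positive at all real embeddings. Let $u_1,\dots,u_r\in\mathcal O^{+,\times}_{\mathfrak f}$ be such that $1,u_1,\dots,u_r$ are $\mathbb Q$-linearly independent, and $u_0=1$. Let $h\in L$ be admissible, $h=mh'$ with $m\in\mathbb Z_{>0}$ and $h'$ primitive in $L$. Fix a positive $\mathbb Z$-basis $(e_0=h',e_1,\dots,e_{r+1})$ of $L$ with $u_jh'=\sum_{k=0}^jc_{jk0}e_k$, $c_{jk0}\in\mathbb Z$, $c_{jj0}>0$; put $\lambda=\prod_{j=1}^rc_{jj0}$ and let $a:L\to\mathbb Z$ be the linear form with $\lambda a=\det(h',u_1h',\dots,u_rh',\cdot)$ (determinant of coordinates in this basis). Write $au_j$ for $y\mapsto a(u_jy)$. Let $\mathcal A=(au_j(e_k))_{0\le j\le r,\,1\le k\le r+1}\in M_{r+1}(\mathbb Z)$, with elementary divisors $1=A_0\mid A_1\mid\dots\mid A_r$, and put $t=A_r$. Let $(b_{ij})_{1\le i\le r+1,0\le j\le r}=t\mathcal A^{-1}$ (an integer matrix) and $\alpha_j=\sum_{i=1}^{r+1}b_{ij}e_i\in L$, so that $au_k(\alpha_j)=t\delta_{jk}$ for all $0\le j,k\le r$. *)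

theory Defs
  imports "Jordan_Normal_Form.Determinant" "HOL-Computational_Algebra.Primes"
begin

definition unimodular_int :: "nat \<Rightarrow> int mat \<Rightarrow> bool" where
  "unimodular_int n U \<longleftrightarrow> U \<in> carrier_mat n n \<and>
     (\<exists>V \<in> carrier_mat n n. U * V = 1\<^sub>m n \<and> V * U = 1\<^sub>m n)"

definition elementary_divisors :: "nat \<Rightarrow> int mat \<Rightarrow> (nat \<Rightarrow> int) \<Rightarrow> bool" where
  "elementary_divisors n A D \<longleftrightarrow> A \<in> carrier_mat n n \<and>
     (\<forall>i<n. 0 \<le> D i) \<and> (\<forall>i. Suc i < n \<longrightarrow> D i dvd D (Suc i)) \<and>
     (\<exists>U V. unimodular_int n U \<and> unimodular_int n V \<and>
        U * A * V = mat n n (\<lambda>(i,j). if i = j then D i else 0))"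

end

theory Submission
  imports Defs
begin

(* Part (i) is read off the Smith normal form: from A B' = n I one gets
   diag(D) (V^-1 B' U^-1) = n I, whose last diagonal entry says t | n.
   Part (ii) reduces to (i): the coordinates of the alpha'_j along e_1, ..., e_(r+1) form such
   a B', because a is Z-linear on L and a(u_j e_0) = 0 (two equal rows in the determinant).
   For (iii), if every alpha_j were congruent to a multiple of e_0 modulo pL, then p would divide
   every entry of B, and A (B/p) = (t/p) I would give t | t/p by (i), impossible for t ~= 0.
   Finally t ~= 0: otherwise a nonzero integer vector q has q A = 0, so w = sum q_j u_j ~= 0
   satisfies a(w y) = 0 for all y in L; but some integer multiple of e_(r+1)/w lies in L, and
   a(e_(r+1)) = 1 because the determinant defining lam * a(e_(r+1)) is triangular with
   diagonal product lam. *)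

lemma common_denominator_rat:
  fixes q :: "nat \<Rightarrow> rat"
  shows "\<exists>m::int. m > 0 \<and> (\<forall>k<n. \<exists>z::int. of_int m * q k = of_int z)"
proof (induction n)
  case 0
  show ?case by (intro exI[of _ 1]) auto
next
  case (Suc n)
  then obtain m where m: "m > 0" "\<forall>k<n. \<exists>z::int. of_int m * q k = of_int z" by blast
  obtain z d where zd: "quotient_of (q n) = (z, d)" by fastforce
  have d: "d > 0" and qn: "q n = of_int z / of_int d"
    using quotient_of_denom_pos[OF zd] quotient_of_div[OF zd] by auto
  have "\<exists>z'::int. of_int (m * d) * q k = of_int z'" if "k < Suc n" for k
  proof (cases "k = n")
    case True
    then show ?thesis using qn d by (intro exI[of _ "m * z"]) simp
  next
    case False
    with m that obtain z' where "of_int m * q k = of_int z'" by (metis less_SucE)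
    then show ?thesis by (intro exI[of _ "z' * d"]) (simp add: algebra_simps)
  qed
  with m d show ?case by (intro exI[of _ "m * d"]) simp
qed

lemma diagonal_mat_mult_index:
  assumes "C \<in> carrier_mat n m" "i < n" "j < m"
  shows "(mat n n (\<lambda>(i, j). if i = j then D i else 0) * C) $$ (i, j) = D i * C $$ (i, j)"
proof -
  have "(mat n n (\<lambda>(i, j). if i = j then D i else 0) * C) $$ (i, j)
      = (\<Sum>l\<in>{0..<n}. (if i = l then D i else 0) * C $$ (l, j))"
    using assms by (simp add: scalar_prod_def)
  also have "\<dots> = D i * C $$ (i, j)"
    using assms(2) by (simp add: if_distrib[of "\<lambda>x. x * _"] cong: if_cong)
  finally show ?thesis .
qed

lemma prod_list_diag_mat: "prod_list (diag_mat A) = (\<Prod>i<dim_row A. A $$ (i, i))"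
  unfolding diag_mat_def by (simp add: prod.distinct_set_conv_list[symmetric] lessThan_atLeast0)

lemma elementary_divisorsE:
  assumes "elementary_divisors n A D"
  obtains U U' V V' where "A \<in> carrier_mat n n"
    "U \<in> carrier_mat n n" "U' \<in> carrier_mat n n" "U * U' = 1\<^sub>m n"
    "V \<in> carrier_mat n n" "V' \<in> carrier_mat n n" "V * V' = 1\<^sub>m n"
    "U * A * V = mat n n (\<lambda>(i, j). if i = j then D i else 0)"
  using assms unfolding elementary_divisors_def unimodular_int_def by blast

lemma elementary_divisor_last_dvd:
  assumes ed: "elementary_divisors (Suc r) A D"
    and B: "B \<in> carrier_mat (Suc r) (Suc r)" and AB: "A * B = c \<cdot>\<^sub>m 1\<^sub>m (Suc r)"
  shows "D r dvd c"
proof -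
  let ?n = "Suc r" and ?Dg = "mat (Suc r) (Suc r) (\<lambda>(i, j). if i = j then D i else 0)"
  obtain U U' V V' where A: "A \<in> carrier_mat ?n ?n"
    and U: "U \<in> carrier_mat ?n ?n" "U' \<in> carrier_mat ?n ?n" "U * U' = 1\<^sub>m ?n"
    and V: "V \<in> carrier_mat ?n ?n" "V' \<in> carrier_mat ?n ?n" "V * V' = 1\<^sub>m ?n"
    and UAV: "U * A * V = ?Dg"
    using ed by (rule elementary_divisorsE)
  define C where "C = V' * (B * U')"
  have C: "C \<in> carrier_mat ?n ?n" using V U B by (simp add: C_def)
  have "?Dg * C = ((U * A) * (V * V')) * (B * U')"
    using A U(1,2) V(1,2) B
    by (simp add: C_def UAV[symmetric] assoc_mult_mat[of _ ?n ?n _ ?n _ ?n])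
  also have "\<dots> = U * (A * B) * U'"
    using A U V B by (simp add: V(3) assoc_mult_mat[of _ ?n ?n _ ?n _ ?n])
  also have "\<dots> = c \<cdot>\<^sub>m (U * U')"
    using mult_smult_distrib[OF U(1) one_carrier_mat] mult_smult_assoc_mat[OF U(1,2)] U(1)
    by (simp add: AB)
  finally have "?Dg * C = c \<cdot>\<^sub>m 1\<^sub>m ?n" using U(3) by simp
  then have "(?Dg * C) $$ (r, r) = c" by simp
  then have "c = D r * C $$ (r, r)" using diagonal_mat_mult_index[OF C] by simp
  then show ?thesis by simp
qed

lemma elementary_divisor_last_eq_0_left_kernel:
  assumes ed: "elementary_divisors (Suc r) A D" and Dr: "D r = 0"
  obtains q where "\<exists>j<Suc r. q j \<noteq> 0"
    "\<And>k. k < Suc r \<Longrightarrow> (\<Sum>j<Suc r. q j * A $$ (j, k)) = 0"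
proof -
  let ?n = "Suc r" and ?Dg = "mat (Suc r) (Suc r) (\<lambda>(i, j). if i = j then D i else 0)"
  obtain U U' V V' where A: "A \<in> carrier_mat ?n ?n"
    and U: "U \<in> carrier_mat ?n ?n" "U' \<in> carrier_mat ?n ?n" "U * U' = 1\<^sub>m ?n"
    and V: "V \<in> carrier_mat ?n ?n" "V' \<in> carrier_mat ?n ?n" "V * V' = 1\<^sub>m ?n"
    and UAV: "U * A * V = ?Dg"
    using ed by (rule elementary_divisorsE)
  have UA: "U * A = ?Dg * V'"
    using A U V by (simp add: UAV[symmetric] assoc_mult_mat[of _ ?n ?n _ ?n _ ?n])
  show ?thesis
  proof
    show "\<exists>j<?n. U $$ (r, j) \<noteq> 0"
    proof (rule ccontr)
      assume zero: "\<not> ?thesis"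
      have "1 = (U * U') $$ (r, r)" unfolding U(3) by simp
      also have "\<dots> = (\<Sum>l<?n. U $$ (r, l) * U' $$ (l, r))"
        using U(1,2) by (simp add: scalar_prod_def lessThan_atLeast0)
      also have "\<dots> = 0" using zero by simp
      finally show False by simp
    qed
  next
    fix k assume k: "k < ?n"
    have "(\<Sum>j<?n. U $$ (r, j) * A $$ (j, k)) = (U * A) $$ (r, k)"
      using U(1) A k by (simp add: scalar_prod_def lessThan_atLeast0)
    also have "\<dots> = 0"
      using diagonal_mat_mult_index[OF V(2)] k by (simp add: UA Dr)
    finally show "(\<Sum>j<?n. U $$ (r, j) * A $$ (j, k)) = 0" .
  qed
qed

lemma mult_eq_smult_one_divide:
  fixes A B :: "'a::idom_modulo mat"
  assumes A: "A \<in> carrier_mat n n" and B: "B \<in> carrier_mat n n" and n: "0 < n"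
    and AB: "A * B = c \<cdot>\<^sub>m 1\<^sub>m n" and p: "p \<noteq> 0"
    and dvd: "\<forall>i<n. \<forall>j<n. p dvd B $$ (i, j)"
  shows "c = p * (c div p)" "A * mat n n (\<lambda>(i, j). B $$ (i, j) div p) = (c div p) \<cdot>\<^sub>m 1\<^sub>m n"
proof -
  define B' where "B' = mat n n (\<lambda>(i, j). B $$ (i, j) div p)"
  have B': "B' \<in> carrier_mat n n" by (simp add: B'_def)
  have "B = p \<cdot>\<^sub>m B'"
    by (rule eq_matI) (use B dvd in \<open>auto simp: B'_def\<close>)
  then have AB': "c \<cdot>\<^sub>m 1\<^sub>m n = p \<cdot>\<^sub>m (A * B')"
    using AB mult_smult_distrib[OF A B'] by simp
  have entry: "c * (if i = j then 1 else 0) = p * (A * B') $$ (i, j)"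
    if "i < n" "j < n" for i j
  proof -
    have "(c \<cdot>\<^sub>m 1\<^sub>m n) $$ (i, j) = (p \<cdot>\<^sub>m (A * B')) $$ (i, j)" by (simp only: AB')
    then show ?thesis using that A B' by simp
  qed
  have "p dvd c" using entry[OF n n] by simp
  then show c: "c = p * (c div p)" by simp
  show "A * B' = (c div p) \<cdot>\<^sub>m 1\<^sub>m n"
  proof (rule eq_matI)
    fix i j assume "i < dim_row ((c div p) \<cdot>\<^sub>m 1\<^sub>m n)" "j < dim_col ((c div p) \<cdot>\<^sub>m 1\<^sub>m n)"
    then have ij: "i < n" "j < n" by auto
    have "p * (A * B') $$ (i, j) = p * ((c div p) * (if i = j then 1 else 0))"
      using entry[OF ij] c by (metis mult.assoc)
    then show "(A * B') $$ (i, j) = ((c div p) \<cdot>\<^sub>m 1\<^sub>m n) $$ (i, j)"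
      using ij p by simp
  qed (use A B' in auto)
qed

lemma det_linear_in_last_row:
  fixes R :: "nat \<Rightarrow> nat \<Rightarrow> 'a::comm_ring_1"
  shows "\<exists>C. \<forall>v. det (mat (Suc m) (Suc m) (\<lambda>(i, k). if i < m then R i k else v k))
    = (\<Sum>k<Suc m. v k * C k)"
proof (intro exI allI)
  let ?M = "\<lambda>v. mat (Suc m) (Suc m) (\<lambda>(i, k). if i < m then R i k else v k)"
  fix v
  have "det (?M v) = (\<Sum>k<Suc m. ?M v $$ (m, k) * cofactor (?M v) m k)"
    by (rule laplace_expansion_row) auto
  also have "\<dots> = (\<Sum>k<Suc m. v k * cofactor (?M (\<lambda>_. 0)) m k)"
  proof (rule sum.cong[OF refl])
    fix k assume "k \<in> {..<Suc m}"
    moreover have "mat_delete (?M v) m k = mat_delete (?M (\<lambda>_. 0)) m k"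
      unfolding mat_delete_def by (rule cong_mat) auto
    ultimately show "?M v $$ (m, k) * cofactor (?M v) m k = v k * cofactor (?M (\<lambda>_. 0)) m k"
      by (simp add: cofactor_def)
  qed
  finally show "det (?M v) = (\<Sum>k<Suc m. v k * cofactor (?M (\<lambda>_. 0)) m k)" .
qed

locale int_lattice =
  fixes N :: nat and e :: "nat \<Rightarrow> 'a::field_char_0" and L :: "'a set"
    and crd :: "'a \<Rightarrow> nat \<Rightarrow> int"
  assumes basis_span: "\<exists>q::nat \<Rightarrow> rat. x = (\<Sum>k<N. of_rat (q k) * e k)"
    and basis_indep: "(\<Sum>k<N. of_rat (q k) * e k) = 0 \<Longrightarrow> k < N \<Longrightarrow> q k = 0"
    and L_eq: "L = {(\<Sum>k<N. of_int (c k) * e k) | c. True}"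
    and crd_expansion: "y \<in> L \<Longrightarrow> y = (\<Sum>k<N. of_int (crd y k) * e k)"
begin

lemma int_coords_unique:
  assumes "(\<Sum>k<N. of_int (c k) * e k) = (\<Sum>k<N. of_int (d k) * e k)" "k < N"
  shows "c k = d k"
proof -
  have "(\<Sum>k<N. of_rat (of_int (c k - d k)) * e k)
      = (\<Sum>k<N. of_int (c k) * e k - of_int (d k) * e k)"
    by (simp add: of_rat_diff left_diff_distrib)
  also have "\<dots> = 0" using assms(1) by (simp add: sum_subtractf)
  finally have "(of_int (c k - d k) :: rat) = 0" using assms(2) by (rule basis_indep)
  then show ?thesis by simp
qed

lemma int_comb_in_L: "(\<Sum>k<N. of_int (c k) * e k) \<in> L"
  using L_eq by blast

lemma crd_int_comb: "k < N \<Longrightarrow> crd (\<Sum>k<N. of_int (c k) * e k) k = c k"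
  by (rule int_coords_unique[OF crd_expansion[OF int_comb_in_L, symmetric]])

lemma basis_eq_int_comb:
  assumes "m < N"
  shows "e m = (\<Sum>k<N. of_int (if k = m then 1 else 0) * e k)"
proof -
  have "(\<Sum>k<N. of_int (if k = m then 1 else 0) * e k) = (\<Sum>k<N. if k = m then e k else 0)"
    by (rule sum.cong) auto
  then show ?thesis using assms by simp
qed

lemma basis_in_L: "m < N \<Longrightarrow> e m \<in> L"
  unfolding basis_eq_int_comb by (rule int_comb_in_L)

lemma crd_basis: "m < N \<Longrightarrow> k < N \<Longrightarrow> crd (e m) k = (if k = m then 1 else 0)"
  by (subst basis_eq_int_comb) (simp_all add: crd_int_comb)

lemma smult_eq_int_comb:
  assumes "y \<in> L"
  shows "of_int c * y = (\<Sum>k<N. of_int (c * crd y k) * e k)"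
proof -
  have "of_int c * y = of_int c * (\<Sum>k<N. of_int (crd y k) * e k)"
    using crd_expansion[OF assms] by (rule arg_cong)
  then show ?thesis by (simp add: sum_distrib_left mult.assoc)
qed

lemma sum_eq_int_comb:
  assumes "finite I" "\<forall>i\<in>I. y i \<in> L"
  shows "(\<Sum>i\<in>I. of_int (c i) * y i) = (\<Sum>k<N. of_int (\<Sum>i\<in>I. c i * crd (y i) k) * e k)"
proof -
  have "(\<Sum>i\<in>I. of_int (c i) * y i) = (\<Sum>i\<in>I. \<Sum>k<N. of_int (c i * crd (y i) k) * e k)"
    using assms(2) smult_eq_int_comb by simp
  also have "\<dots> = (\<Sum>k<N. of_int (\<Sum>i\<in>I. c i * crd (y i) k) * e k)"
    by (subst sum.swap) (simp add: sum_distrib_right)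
  finally show ?thesis .
qed

lemma sum_in_L:
  assumes "finite I" "\<forall>i\<in>I. y i \<in> L"
  shows "(\<Sum>i\<in>I. of_int (c i) * y i) \<in> L"
  unfolding sum_eq_int_comb[OF assms] by (rule int_comb_in_L)

lemma crd_sum:
  assumes "finite I" "\<forall>i\<in>I. y i \<in> L" "k < N"
  shows "crd (\<Sum>i\<in>I. of_int (c i) * y i) k = (\<Sum>i\<in>I. c i * crd (y i) k)"
  unfolding sum_eq_int_comb[OF assms(1,2)] using assms(3) by (rule crd_int_comb)

lemma dvd_int_coords_if_in_smult_L:
  assumes "x \<in> {of_int p * y | y. y \<in> L}" "x = (\<Sum>k<N. of_int (c k) * e k)" "k < N"
  shows "p dvd c k"
proof -
  obtain y where "y \<in> L" "x = of_int p * y" using assms(1) by blast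
  then have "(\<Sum>k<N. of_int (c k) * e k) = (\<Sum>k<N. of_int (p * crd y k) * e k)"
    using assms(2) smult_eq_int_comb by simp
  then have "c k = p * crd y k" using assms(3) by (rule int_coords_unique)
  then show ?thesis by simp
qed

lemma int_multiple_in_L: obtains m :: int where "m > 0" "of_int m * x \<in> L"
proof -
  obtain q where q: "x = (\<Sum>k<N. of_rat (q k) * e k)" using basis_span by blast
  obtain m where "m > 0" and "\<forall>k<N. \<exists>z::int. of_int m * q k = of_int z"
    using common_denominator_rat by blast
  then obtain z where z: "\<And>k. k < N \<Longrightarrow> of_int m * q k = of_int (z k)" by metis
  have "of_int m * x = (\<Sum>k<N. of_rat (of_int m * q k) * e k)"
    by (simp add: q sum_distrib_left of_rat_mult mult.assoc)
  also have "\<dots> = (\<Sum>k<N. of_int (z k) * e k)" by (simp add: z)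
  finally show ?thesis using that[OF \<open>m > 0\<close>] int_comb_in_L by simp
qed

lemma int_linear_on_L:
  fixes f :: "'a \<Rightarrow> int"
  assumes lam: "lam \<noteq> 0" and f: "\<And>y. y \<in> L \<Longrightarrow> lam * f y = (\<Sum>k<N. crd y k * C k)"
    and I: "finite I" "\<forall>i\<in>I. y i \<in> L"
  shows "f (\<Sum>i\<in>I. of_int (c i) * y i) = (\<Sum>i\<in>I. c i * f (y i))"
proof -
  have "lam * f (\<Sum>i\<in>I. of_int (c i) * y i) = (\<Sum>k<N. (\<Sum>i\<in>I. c i * crd (y i) k) * C k)"
    using f[OF sum_in_L[OF I]] crd_sum[OF I] by simp
  also have "\<dots> = (\<Sum>i\<in>I. c i * (\<Sum>k<N. crd (y i) k * C k))"
    by (simp add: sum_distrib_left sum_distrib_right mult.assoc sum.swap[of _ I])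
  also have "\<dots> = (\<Sum>i\<in>I. c i * (lam * f (y i)))"
    by (rule sum.cong[OF refl]) (use f I(2) in simp)
  also have "\<dots> = lam * (\<Sum>i\<in>I. c i * f (y i))"
    by (simp add: sum_distrib_left mult.left_commute)
  finally show ?thesis using lam by simp
qed

end

(* e 0 plays the role of h', and lam * a y is det(h', u_1 h', ..., u_r h', y) in the
   coordinates crd; form_mat v is that matrix with last row v. *)
locale det_form = int_lattice "r + 2" e L crd
  for r and e :: "nat \<Rightarrow> 'a::field_char_0" and L crd +
  fixes u :: "nat \<Rightarrow> 'a" and cc :: "nat \<Rightarrow> nat \<Rightarrow> int" and lam :: int and a :: "'a \<Rightarrow> int"
  assumes u0: "u 0 = 1"
    and u_mult_L: "j \<le> r \<Longrightarrow> y \<in> L \<Longrightarrow> u j * y \<in> L"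
    and u_e0_triangular: "j \<in> {1..r} \<Longrightarrow> u j * e 0 = (\<Sum>k\<le>j. of_int (cc j k) * e k)"
    and cc_diag_pos: "j \<in> {1..r} \<Longrightarrow> cc j j > 0"
    and lam_eq: "lam = (\<Prod>j\<in>{1..r}. cc j j)"
    and lam_a_eq_det: "y \<in> L \<Longrightarrow>
      lam * a y = det (mat (r+2) (r+2) (\<lambda>(i, k). crd (if i \<le> r then u i * e 0 else y) k))"
begin

definition form_mat :: "(nat \<Rightarrow> int) \<Rightarrow> int mat" where
  "form_mat v = mat (r+2) (r+2) (\<lambda>(i, k). if i \<le> r then crd (u i * e 0) k else v k)"

lemma form_mat_carrier: "form_mat v \<in> carrier_mat (r+2) (r+2)"
  by (simp add: form_mat_def)

lemma lam_a_eq_det_form_mat: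
  assumes "y \<in> L"
  shows "lam * a y = det (form_mat (crd y))"
proof -
  have "mat (r+2) (r+2) (\<lambda>(i, k). crd (if i \<le> r then u i * e 0 else y) k) = form_mat (crd y)"
    unfolding form_mat_def by (rule cong_mat) auto
  then show ?thesis using lam_a_eq_det[OF assms] by simp
qed

lemma lam_pos: "lam > 0"
  unfolding lam_eq by (rule prod_pos) (use cc_diag_pos in auto)

lemma a_int_linear:
  assumes "finite I" "\<forall>i\<in>I. y i \<in> L"
  shows "a (\<Sum>i\<in>I. of_int (c i) * y i) = (\<Sum>i\<in>I. c i * a (y i))"
proof -
  obtain C where C: "\<And>v. det (mat (Suc (r+1)) (Suc (r+1))
      (\<lambda>(i, k). if i < r+1 then crd (u i * e 0) k else v k)) = (\<Sum>k<Suc (r+1). v k * C k)"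
    using det_linear_in_last_row[of "r+1" "\<lambda>i k. crd (u i * e 0) k"] by blast
  have lam_a: "lam * a y = (\<Sum>k<r+2. crd y k * C k)" if "y \<in> L" for y
    using lam_a_eq_det_form_mat[OF that] C[of "crd y"] by (simp add: form_mat_def less_Suc_eq_le)
  have "lam \<noteq> 0" using lam_pos by simp
  then show ?thesis using lam_a assms by (rule int_linear_on_L)
qed

lemma a_u_e0_eq_0: "j \<le> r \<Longrightarrow> a (u j * e 0) = 0"
proof -
  assume j: "j \<le> r"
  have "det (form_mat (crd (u j * e 0))) = 0"
    by (rule det_identical_rows[OF form_mat_carrier, of j "r+1"])
      (use j in \<open>auto intro!: eq_vecI simp: form_mat_def\<close>)
  then have "lam * a (u j * e 0) = 0"
    using lam_a_eq_det_form_mat u_mult_L[OF j basis_in_L[of 0]] by simp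
  then show ?thesis using lam_pos by simp
qed

lemma crd_u_e0:
  assumes i: "i \<in> {1..r}" and k: "k < r+2"
  shows "crd (u i * e 0) k = (if k \<le> i then cc i k else 0)"
proof -
  have "{..<r+2} \<inter> {..i} = {..i}" using i by auto
  then have "u i * e 0 = (\<Sum>k\<in>{..<r+2} \<inter> {..i}. of_int (cc i k) * e k)"
    using i by (simp add: u_e0_triangular)
  also have "\<dots> = (\<Sum>k<r+2. of_int (if k \<le> i then cc i k else 0) * e k)"
    by (simp add: sum.inter_restrict if_distrib[of "\<lambda>x. of_int x * _"] cong: if_cong)
  finally have ue: "u i * e 0 = (\<Sum>k<r+2. of_int (if k \<le> i then cc i k else 0) * e k)" .
  show ?thesis unfolding ue by (rule crd_int_comb[OF k])
qed

lemma form_mat_upper_eq_0: "i < k \<Longrightarrow> k < r+2 \<Longrightarrow> form_mat v $$ (i, k) = 0"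
  by (cases "i = 0") (auto simp: form_mat_def u0 crd_basis crd_u_e0)

lemma a_last_basis: "a (e (r+1)) = 1"
proof -
  let ?M = "form_mat (crd (e (r+1)))"
  have "lam * a (e (r+1)) = det ?M"
    using lam_a_eq_det_form_mat basis_in_L by simp
  also have "\<dots> = prod_list (diag_mat ?M)"
    by (rule det_lower_triangular[OF form_mat_upper_eq_0 form_mat_carrier])
  also have "\<dots> = (\<Prod>i<r+2. ?M $$ (i, i))"
    by (simp add: prod_list_diag_mat form_mat_def)
  also have "\<dots> = (\<Prod>i\<in>{1..r}. ?M $$ (i, i))"
    by (rule prod.mono_neutral_right)
      (auto simp: form_mat_def u0 crd_basis not_less_eq_eq le_Suc_eq)
  also have "\<dots> = lam"
    unfolding lam_eq by (rule prod.cong[OF refl]) (auto simp: form_mat_def crd_u_e0)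
  finally show ?thesis using lam_pos by simp
qed

lemma eq_0_if_a_mult_vanishes:
  assumes vanish: "\<And>y. y \<in> L \<Longrightarrow> a (w * y) = 0"
  shows "w = 0"
proof (rule ccontr)
  assume w: "w \<noteq> 0"
  obtain m where m: "m > 0" "of_int m * (e (r+1) / w) \<in> L"
    by (rule int_multiple_in_L)
  have "w * (of_int m * (e (r+1) / w)) = (\<Sum>i\<in>{r+1}. of_int m * e i)"
    using w by simp
  then have "a (w * (of_int m * (e (r+1) / w))) = m * a (e (r+1))"
    using a_int_linear[of "{r+1}" e "\<lambda>_. m"] basis_in_L by simp
  then show False using vanish[OF m(2)] a_last_basis m(1) by simp
qed

end

locale form_matrix = det_form +
  fixes Amat :: "int mat" and D :: "nat \<Rightarrow> int" and t :: int
  assumes u_indep: "(\<Sum>j\<le>r. of_rat (q j) * u j) = 0 \<Longrightarrow> j \<le> r \<Longrightarrow> q j = 0"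
    and Amat_eq: "Amat = mat (r+1) (r+1) (\<lambda>(j, k). a (u j * e (k+1)))"
    and elementary_divisors_Amat: "elementary_divisors (r+1) Amat D"
    and t_eq: "t = D r"
begin

lemma Amat_carrier: "Amat \<in> carrier_mat (r+1) (r+1)"
  by (simp add: Amat_eq)

lemma a_u_mult_eq:
  assumes j: "j \<le> r" and y: "y \<in> L"
  shows "a (u j * y) = (\<Sum>k<r+1. Amat $$ (j, k) * crd y (k+1))"
proof -
  have "u j * y = u j * (\<Sum>k<r+2. of_int (crd y k) * e k)"
    using crd_expansion[OF y] by (rule arg_cong)
  also have "\<dots> = (\<Sum>k<r+2. of_int (crd y k) * (u j * e k))"
    by (simp only: sum_distrib_left mult.left_commute)
  finally have "a (u j * y) = (\<Sum>k<r+2. crd y k * a (u j * e k))"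
    using a_int_linear[of "{..<r+2}" "\<lambda>k. u j * e k"] u_mult_L[OF j] basis_in_L by simp
  also have "\<dots> = (\<Sum>k<r+1. crd y (k+1) * a (u j * e (k+1)))"
    using sum.lessThan_Suc_shift[of "\<lambda>k. crd y k * a (u j * e k)" "r+1"] a_u_e0_eq_0[OF j]
    by simp
  also have "\<dots> = (\<Sum>k<r+1. Amat $$ (j, k) * crd y (k+1))"
    using j by (simp add: Amat_eq mult.commute)
  finally show ?thesis .
qed

lemma t_dvd_if_Amat_mult_eq:
  "B' \<in> carrier_mat (r+1) (r+1) \<Longrightarrow> Amat * B' = n \<cdot>\<^sub>m 1\<^sub>m (r+1) \<Longrightarrow> t dvd n"
  using elementary_divisor_last_dvd[of r Amat D B' n] elementary_divisors_Amat t_eq by simp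

lemma t_dvd_if_dual_family:
  assumes \<alpha>'_L: "\<forall>j\<le>r. \<alpha>' j \<in> L"
    and dual: "\<forall>j\<le>r. \<forall>k\<le>r. a (u k * \<alpha>' j) = (if k = j then n else 0)"
  shows "t dvd n"
proof (rule t_dvd_if_Amat_mult_eq)
  define B' where "B' = mat (r+1) (r+1) (\<lambda>(i, j). crd (\<alpha>' j) (i+1))"
  show B': "B' \<in> carrier_mat (r+1) (r+1)" by (simp add: B'_def)
  show "Amat * B' = n \<cdot>\<^sub>m 1\<^sub>m (r+1)"
  proof (rule eq_matI)
    fix k j assume "k < dim_row (n \<cdot>\<^sub>m 1\<^sub>m (r+1))" "j < dim_col (n \<cdot>\<^sub>m 1\<^sub>m (r+1))"
    then have kj: "k \<le> r" "j \<le> r" by auto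
    have "(Amat * B') $$ (k, j) = (\<Sum>i<r+1. Amat $$ (k, i) * crd (\<alpha>' j) (i+1))"
      using kj Amat_carrier B' by (simp add: scalar_prod_def B'_def lessThan_atLeast0)
    also have "\<dots> = a (u k * \<alpha>' j)"
      using a_u_mult_eq kj \<alpha>'_L by simp
    finally show "(Amat * B') $$ (k, j) = (n \<cdot>\<^sub>m 1\<^sub>m (r+1)) $$ (k, j)"
      using dual kj by simp
  qed (use Amat_carrier B' in auto)
qed

lemma t_nonzero: "t \<noteq> 0"
proof
  assume "t = 0"
  have "elementary_divisors (Suc r) Amat D" "D r = 0"
    using elementary_divisors_Amat \<open>t = 0\<close> t_eq by simp_all
  then obtain q where q: "\<exists>j<Suc r. q j \<noteq> 0"
    and qA: "\<And>k. k < Suc r \<Longrightarrow> (\<Sum>j<Suc r. q j * Amat $$ (j, k)) = 0"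
    using elementary_divisor_last_eq_0_left_kernel by blast
  define w where "w = (\<Sum>j\<le>r. of_int (q j) * u j)"
  have "a (w * y) = 0" if y: "y \<in> L" for y
  proof -
    have "w * y = (\<Sum>j\<le>r. of_int (q j) * (u j * y))"
      by (simp add: w_def sum_distrib_right mult.assoc)
    then have "a (w * y) = (\<Sum>j\<le>r. q j * (\<Sum>k<r+1. Amat $$ (j, k) * crd y (k+1)))"
      using a_int_linear[of "{..r}" "\<lambda>j. u j * y" q] u_mult_L[OF _ y] a_u_mult_eq[OF _ y]
      by simp
    also have "\<dots> = (\<Sum>j\<le>r. \<Sum>k<r+1. crd y (k+1) * (q j * Amat $$ (j, k)))"
      by (simp only: sum_distrib_left mult_ac)
    also have "\<dots> = (\<Sum>k<r+1. crd y (k+1) * (\<Sum>j<Suc r. q j * Amat $$ (j, k)))"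
      by (subst sum.swap) (simp only: sum_distrib_left lessThan_Suc_atMost)
    also have "\<dots> = 0" using qA by simp
    finally show ?thesis .
  qed
  then have "w = 0" by (rule eq_0_if_a_mult_vanishes)
  then have "(\<Sum>j\<le>r. of_rat (of_int (q j)) * u j) = 0" by (simp add: w_def)
  then have "rat_of_int (q j) = 0" if "j \<le> r" for j using that by (rule u_indep)
  then show False using q by (auto simp: less_Suc_eq_le)
qed

lemma exists_coord_not_congruent:
  assumes B: "B \<in> carrier_mat (r+1) (r+1)" "Amat * B = t \<cdot>\<^sub>m 1\<^sub>m (r+1)"
    and \<alpha>: "\<And>j. \<alpha> j = (\<Sum>i<r+1. of_int (B $$ (i, j)) * e (i+1))"
    and p: "prime p"
  shows "\<exists>j\<le>r. \<forall>n'::int. \<alpha> j - of_int n' * e 0 \<notin> {of_int p * y | y. y \<in> L}"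
proof (rule ccontr)
  assume "\<not> ?thesis"
  then have cong: "\<exists>n'::int. \<alpha> j - of_int n' * e 0 \<in> {of_int p * y | y. y \<in> L}"
    if "j \<le> r" for j
    using that by blast
  have dvd: "\<forall>i<r+1. \<forall>j<r+1. p dvd B $$ (i, j)"
  proof (intro allI impI)
    fix i j assume ij: "i < r+1" "j < r+1"
    obtain n' where n': "\<alpha> j - of_int n' * e 0 \<in> {of_int p * y | y. y \<in> L}"
      using cong[of j] ij(2) by auto
    define c where "c k = (if k = 0 then - n' else B $$ (k - 1, j))" for k
    have "(\<Sum>k<Suc (r+1). of_int (c k) * e k)
        = of_int (c 0) * e 0 + (\<Sum>k<r+1. of_int (c (Suc k)) * e (Suc k))"
      by (rule sum.lessThan_Suc_shift)
    also have "\<dots> = \<alpha> j - of_int n' * e 0" by (simp add: c_def \<alpha>)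
    finally have "\<alpha> j - of_int n' * e 0 = (\<Sum>k<r+2. of_int (c k) * e k)" by simp
    with n' have "p dvd c (i+1)" by (rule dvd_int_coords_if_in_smult_L) (use ij in simp)
    then show "p dvd B $$ (i, j)" by (simp add: c_def)
  qed
  have "p \<noteq> 0" "0 < r+1" using p by auto
  from mult_eq_smult_one_divide[OF Amat_carrier B(1) this(2) B(2) this(1) dvd]
  have t: "t = p * (t div p)"
    and "Amat * mat (r+1) (r+1) (\<lambda>(i, j). B $$ (i, j) div p) = (t div p) \<cdot>\<^sub>m 1\<^sub>m (r+1)" .
  then have "t dvd t div p" by (intro t_dvd_if_Amat_mult_eq) auto
  then have "p * (t div p) dvd 1 * (t div p)" using t by simp
  moreover have "t div p \<noteq> 0" using t t_nonzero by auto
  ultimately have "p dvd 1" by simp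
  then show False using p not_prime_unit by blast
qed

end

theorem lemma12:
  fixes r :: nat
    and e :: "nat \<Rightarrow> 'a :: field_char_0"
    and L :: "'a set"
    and u :: "nat \<Rightarrow> 'a"
    and cc :: "nat \<Rightarrow> nat \<Rightarrow> int"
    and crd :: "'a \<Rightarrow> nat \<Rightarrow> int"
    and a :: "'a \<Rightarrow> int"
    and lam t :: int
    and Amat B :: "int mat"
    and D :: "nat \<Rightarrow> int"
    and \<alpha> :: "nat \<Rightarrow> 'a"
  assumes Q_span: "\<forall>x. \<exists>q :: nat \<Rightarrow> rat. x = (\<Sum>k<r+2. of_rat (q k) * e k)"
    and Q_indep: "\<forall>q :: nat \<Rightarrow> rat. (\<Sum>k<r+2. of_rat (q k) * e k) = 0 \<longrightarrow> (\<forall>k<r+2. q k = 0)"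
    and L_def: "L = {(\<Sum>k<r+2. of_int (c k) * e k) | c. True}"
    and u0: "u 0 = 1"
    and u_indep: "\<forall>q :: nat \<Rightarrow> rat. (\<Sum>j\<le>r. of_rat (q j) * u j) = 0 \<longrightarrow> (\<forall>j\<le>r. q j = 0)"
    and u_L: "\<forall>j\<le>r. \<forall>y\<in>L. u j * y \<in> L"
    and tri: "\<forall>j\<in>{1..r}. u j * e 0 = (\<Sum>k\<le>j. of_int (cc j k) * e k) \<and> cc j j > 0"
    and lam_def: "lam = (\<Prod>j\<in>{1..r}. cc j j)"
    and crd: "\<forall>y\<in>L. y = (\<Sum>k<r+2. of_int (crd y k) * e k)"
    and a_def: "\<forall>y\<in>L. lam * a y =
        det (mat (r+2) (r+2) (\<lambda>(i,k). crd (if i \<le> r then u i * e 0 else y) k))"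
    and A_def: "Amat = mat (r+1) (r+1) (\<lambda>(j,k). a (u j * e (k+1)))"
    and ed: "elementary_divisors (r+1) Amat D"
    and D0: "D 0 = 1"
    and t_def: "t = D r"
    and B_carrier: "B \<in> carrier_mat (r+1) (r+1)"
    and B_def: "Amat * B = t \<cdot>\<^sub>m 1\<^sub>m (r+1)"
    and \<alpha>_def: "\<forall>j. \<alpha> j = (\<Sum>i<r+1. of_int (B $$ (i,j)) * e (i+1))"
  shows "(\<forall>B' (n::int). B' \<in> carrier_mat (r+1) (r+1) \<and> Amat * B' = n \<cdot>\<^sub>m 1\<^sub>m (r+1)
            \<longrightarrow> t dvd n)
       \<and> (\<forall>(\<alpha>' :: nat \<Rightarrow> 'a) (n::int). (\<forall>j\<le>r. \<alpha>' j \<in> L) \<and> n > 0 \<and>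
            (\<forall>j\<le>r. \<forall>k\<le>r. a (u k * \<alpha>' j) = (if k = j then n else 0))
            \<longrightarrow> t dvd n)
       \<and> (\<forall>p::int. prime p \<longrightarrow>
            (\<exists>j\<le>r. \<forall>n'::int. \<alpha> j - of_int n' * e 0 \<notin> {of_int p * y | y. y \<in> L}))"
proof -
  interpret form_matrix r e L crd u cc lam a Amat D t
    by unfold_locales (use assms in auto)
  show ?thesis
    using t_dvd_if_Amat_mult_eq t_dvd_if_dual_family
      exists_coord_not_congruent[OF B_carrier B_def \<alpha>_def[rule_format]]
    by blast
qed

end
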